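(* Let $q\geq 2$, let $A\in\mathbb{R}_{\geq0}^{q\times q}$, let $V$ be the value of the one-shot two-person zero-sum game defined by $A$, and let $0<\varepsilon\leq V$ be a constant. Let $\mathrm{ALG}$ be an algorithm (possibly randomized, with advice) for the repeated matrix game with cost matrix $A$. If $\mathbb{E}[\mathrm{ALG}(\sigma)]\leq (V-\varepsilon)n$ for every input $\sigma$ of length $n$, then $\mathrm{ALG}$ must read at least $$b\geq \frac{\varepsilon^2}{2\ln(2)\cdot\|A\|_\infty^2}\,n=\Omega(n)$$ bits of advice.
   Context: The one-shot game defined by $A$: a row player chooses $x\in[q]=\{1,\dots,q\}$, a column player chooses $y\in[q]$ simultaneously, and the column player pays $A(x,y)$ to the row player; its value $V$ is $\max_\mu\min_\nu\mathbb{E}_{x\sim\mu,y\sim\nu}A(x,y)$ over mixed strategies. $\|A\|_\infty=\max_{x,y}A(x,y)$. The repeated matrix game (RMG) with cost matrix $A$ is the online problem with inputs $\sigma=(n,x_1,\dots,x_n)$, $x_i\in[q]$; in round $i$ ($1\le i\le n$) the algorithm learns $n$ (if $i=1$) or $x_{i-1}$ (if $i>1$), then answers $y_i\in[q]$ as a function of $n,x_1,\dots,x_{i-1}$ (and its advice/randomness); the cost is $\sum_{i=1}^nA(x_i,y_i)$. Here $n$ (the number of characters) is called the length of the input. Algorithms with advice read bits from an infinite advice tape prepared by an oracle knowing the whole input; a randomized algorithm with advice is a probability distribution over deterministic algorithms with advice. *)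

theory Defs
  imports "HOL-Probability.Probability"
begin

definition mixed_strategies :: "nat \<Rightarrow> (nat \<Rightarrow> real) set" where
  "mixed_strategies q = {p. (\<forall>i\<in>{1..q}. 0 \<le> p i) \<and> (\<Sum>i=1..q. p i) = 1}"

definition game_value :: "nat \<Rightarrow> (nat \<Rightarrow> nat \<Rightarrow> real) \<Rightarrow> real" where
  "game_value q A = (SUP \<mu>\<in>mixed_strategies q. INF \<nu>\<in>mixed_strategies q.
      (\<Sum>x=1..q. \<Sum>y=1..q. \<mu> x * \<nu> y * A x y))"

definition max_entry :: "nat \<Rightarrow> (nat \<Rightarrow> nat \<Rightarrow> real) \<Rightarrow> real" where
  "max_entry q A = Max {A x y | x y. x \<in> {1..q} \<and> y \<in> {1..q}}"

text \<open>A deterministic online algorithm with advice for the RMG.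
  answer n xs w : answer in round (length xs + 1), given n, previous requests xs, advice tape w.
  reads n xs w  : number of advice bits read (from the start of the tape) up to and including
                  that round.
  advice n xs   : advice tape prepared by the advice-giver  for the input (n, xs).\<close>
record det_adv_alg =
  answer :: "nat \<Rightarrow> nat list \<Rightarrow> (nat \<Rightarrow> bool) \<Rightarrow> nat"
  reads  :: "nat \<Rightarrow> nat list \<Rightarrow> (nat \<Rightarrow> bool) \<Rightarrow> nat"
  advice :: "nat \<Rightarrow> nat list \<Rightarrow> (nat \<Rightarrow> bool)"

definition wf_alg :: "nat \<Rightarrow> det_adv_alg \<Rightarrow> bool" where
  "wf_alg q D \<longleftrightarrow>
     (\<forall>n xs w. set xs \<subseteq> {1..q} \<longrightarrow> answer D n xs w \<in> {1..q}) \<and>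
     (\<forall>n xs w w'. (\<forall>i < reads D n xs w. w' i = w i) \<longrightarrow>
        answer D n xs w' = answer D n xs w \<and> reads D n xs w' = reads D n xs w)"

definition valid_input :: "nat \<Rightarrow> nat \<Rightarrow> nat list \<Rightarrow> bool" where
  "valid_input q n xs \<longleftrightarrow> length xs = n \<and> set xs \<subseteq> {1..q}"

definition alg_cost :: "(nat \<Rightarrow> nat \<Rightarrow> real) \<Rightarrow> det_adv_alg \<Rightarrow> nat \<Rightarrow> nat list \<Rightarrow> real" where
  "alg_cost A D n xs = (\<Sum>i<n. A (xs ! i) (answer D n (take i xs) (advice D n xs)))"

definition bits_read :: "det_adv_alg \<Rightarrow> nat \<Rightarrow> nat list \<Rightarrow> nat" where
  "bits_read D n xs = Max (insert 0 {reads D n (take i xs) (advice D n xs) | i. i < n})"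

end

theory Submission
  imports Defs
begin

text \<open>The adversary draws the requests i.i.d.\ from a row strategy \<mu> that is \<delta>-optimal in the
  one-shot game, so every fixed online answer sequence pays at least \<open>V - \<delta>\<close> per round in
  expectation, and by a Hoeffding-type bound its cost has exponential moment
  \<open>E exp(-\<lambda> cost) \<le> exp(-\<lambda>(V - \<delta>) + \<lambda>\<^sup>2\<parallel>A\<parallel>\<^sup>2/2)\<^sup>n\<close>.  An algorithm reading at most B advice bits
  behaves on every input like one of at most \<open>2\<^sup>B\<close> algorithms without advice (one per prefix of
  the tape), so its exponential moment is at most \<open>2\<^sup>B\<close> times as large.  Jensen's inequality
  turns this into \<open>\<lambda> n (V - \<delta>) - B ln 2 - n \<lambda>\<^sup>2\<parallel>A\<parallel>\<^sup>2/2 \<le> \<lambda> E cost \<le> \<lambda> (V - \<epsilon>) n\<close>; letting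
  \<open>\<delta> \<rightarrow> 0\<close> and choosing \<open>\<lambda> = \<epsilon>/\<parallel>A\<parallel>\<^sup>2\<close> gives the bound.\<close>

lemma exp_minus_le_quadratic:
  fixes t :: real
  assumes "0 \<le> t"
  shows "exp (-t) \<le> 1 - t + t\<^sup>2 / 2"
proof -
  obtain s where "exp (-t) = (\<Sum>m<3. (-t) ^ m / fact m) + exp s / fact 3 * (-t) ^ 3"
    using Maclaurin_exp_le[of "-t" 3] by blast
  moreover have "(\<Sum>m<3. (-t) ^ m / fact m) = 1 - t + t\<^sup>2 / 2"
    by (simp add: numeral_3_eq_3 fact_numeral power2_eq_square)
  moreover have "exp s / fact 3 * (-t) ^ 3 \<le> 0"
    using assms by (simp add: mult_nonneg_nonpos)
  ultimately show ?thesis by linarith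
qed

text \<open>\<open>iid_expect q \<mu> k f\<close> is the expectation of \<open>f [x\<^sub>1, \<dots>, x\<^sub>k]\<close> for \<open>x\<^sub>1, \<dots>, x\<^sub>k\<close> drawn
  independently from \<mu> on \<open>{1..q}\<close>.\<close>

fun iid_expect :: "nat \<Rightarrow> (nat \<Rightarrow> real) \<Rightarrow> nat \<Rightarrow> (nat list \<Rightarrow> real) \<Rightarrow> real" where
  "iid_expect q \<mu> 0 f = f []"
| "iid_expect q \<mu> (Suc k) f = (\<Sum>x=1..q. \<mu> x * iid_expect q \<mu> k (\<lambda>xs. f (x # xs)))"

lemma iid_expect_mono:
  assumes "\<mu> \<in> mixed_strategies q"
    and "\<And>xs. length xs = k \<Longrightarrow> set xs \<subseteq> {1..q} \<Longrightarrow> f xs \<le> g xs"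
  shows "iid_expect q \<mu> k f \<le> iid_expect q \<mu> k g"
  using assms(2)
proof (induction k arbitrary: f g)
  case 0
  then show ?case by simp
next
  case (Suc k)
  have "\<mu> x * iid_expect q \<mu> k (\<lambda>xs. f (x # xs)) \<le> \<mu> x * iid_expect q \<mu> k (\<lambda>xs. g (x # xs))"
    if "x \<in> {1..q}" for x
  proof (rule mult_left_mono)
    show "iid_expect q \<mu> k (\<lambda>xs. f (x # xs)) \<le> iid_expect q \<mu> k (\<lambda>xs. g (x # xs))"
      using Suc.IH[of "\<lambda>xs. f (x # xs)" "\<lambda>xs. g (x # xs)"] Suc.prems that by auto
    show "0 \<le> \<mu> x"
      using assms(1) that by (auto simp: mixed_strategies_def)
  qed
  then show ?case
    by (simp add: sum_mono del: atLeastAtMost_iff)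
qed

lemma iid_expect_affine:
  assumes "\<mu> \<in> mixed_strategies q"
  shows "iid_expect q \<mu> k (\<lambda>xs. a + c * f xs) = a + c * iid_expect q \<mu> k f"
proof (induction k arbitrary: f)
  case 0
  then show ?case by simp
next
  case (Suc k)
  have "iid_expect q \<mu> (Suc k) (\<lambda>xs. a + c * f xs)
      = a * (\<Sum>x=1..q. \<mu> x) + c * (\<Sum>x=1..q. \<mu> x * iid_expect q \<mu> k (\<lambda>xs. f (x # xs)))"
    using Suc.IH by (simp add: algebra_simps sum.distrib sum_distrib_left)
  then show ?case
    using assms by (simp add: mixed_strategies_def)
qed

lemma iid_expect_const:
  assumes "\<mu> \<in> mixed_strategies q"
  shows "iid_expect q \<mu> k (\<lambda>_. a) = a"
  using iid_expect_affine[OF assms, of k a 0 "\<lambda>_. 0"] by simp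

lemma iid_expect_sum:
  assumes "finite T"
  shows "iid_expect q \<mu> k (\<lambda>xs. \<Sum>t\<in>T. f t xs) = (\<Sum>t\<in>T. iid_expect q \<mu> k (f t))"
proof (induction k arbitrary: f)
  case 0
  then show ?case by simp
next
  case (Suc k)
  then show ?case
    by (simp add: sum_distrib_left sum.swap[of _ T])
qed

lemma exp_iid_expect_le:
  assumes "\<mu> \<in> mixed_strategies q"
  shows "exp (iid_expect q \<mu> k f) \<le> iid_expect q \<mu> k (\<lambda>xs. exp (f xs))"
proof -
  define c where "c = iid_expect q \<mu> k f"
  \<comment> \<open>Jensen's inequality via the tangent line of exp at the mean.\<close>
  have "exp c = iid_expect q \<mu> k (\<lambda>xs. (exp c - exp c * c) + exp c * f xs)"
    by (simp add: iid_expect_affine[OF assms] c_def)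
  also have "\<dots> \<le> iid_expect q \<mu> k (\<lambda>xs. exp (f xs))"
  proof (rule iid_expect_mono[OF assms])
    fix xs
    have "exp c * (1 + (f xs - c)) \<le> exp c * exp (f xs - c)"
      by (intro mult_left_mono exp_ge_add_one_self) auto
    then show "(exp c - exp c * c) + exp c * f xs \<le> exp (f xs)"
      by (simp add: exp_diff algebra_simps)
  qed
  finally show ?thesis
    unfolding c_def .
qed

lemma iid_expect_integral:
  fixes f :: "'w \<Rightarrow> nat list \<Rightarrow> real"
  assumes "\<And>xs. length xs = k \<Longrightarrow> set xs \<subseteq> {1..q} \<Longrightarrow> integrable M (\<lambda>\<omega>. f \<omega> xs)"
  shows "integrable M (\<lambda>\<omega>. iid_expect q \<mu> k (f \<omega>))"
    and "(\<integral>\<omega>. iid_expect q \<mu> k (f \<omega>) \<partial>M) = iid_expect q \<mu> k (\<lambda>xs. \<integral>\<omega>. f \<omega> xs \<partial>M)"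
proof -
  have "integrable M (\<lambda>\<omega>. iid_expect q \<mu> k (f \<omega>)) \<and>
      (\<integral>\<omega>. iid_expect q \<mu> k (f \<omega>) \<partial>M) = iid_expect q \<mu> k (\<lambda>xs. \<integral>\<omega>. f \<omega> xs \<partial>M)"
    using assms
  proof (induction k arbitrary: f)
    case 0
    then show ?case by simp
  next
    case (Suc k)
    have IH: "integrable M (\<lambda>\<omega>. iid_expect q \<mu> k (\<lambda>xs. f \<omega> (x # xs))) \<and>
        (\<integral>\<omega>. iid_expect q \<mu> k (\<lambda>xs. f \<omega> (x # xs)) \<partial>M)
          = iid_expect q \<mu> k (\<lambda>xs. \<integral>\<omega>. f \<omega> (x # xs) \<partial>M)"
      if "x \<in> {1..q}" for x
      using Suc.IH[of "\<lambda>\<omega> xs. f \<omega> (x # xs)"] Suc.prems that by auto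
    then show ?case
      by (auto intro!: sum.cong simp: Bochner_Integration.integral_sum)
  qed
  then show "integrable M (\<lambda>\<omega>. iid_expect q \<mu> k (f \<omega>))"
    and "(\<integral>\<omega>. iid_expect q \<mu> k (f \<omega>) \<partial>M) = iid_expect q \<mu> k (\<lambda>xs. \<integral>\<omega>. f \<omega> xs \<partial>M)"
    by blast+
qed

lemma hoeffding_lemma_nonneg:
  fixes a :: "nat \<Rightarrow> real"
  assumes \<mu>: "\<mu> \<in> mixed_strategies q"
    and a: "\<And>x. x \<in> {1..q} \<Longrightarrow> 0 \<le> a x \<and> a x \<le> c"
    and "0 \<le> l"
  shows "(\<Sum>x=1..q. \<mu> x * exp (-l * a x)) \<le> exp (-l * (\<Sum>x=1..q. \<mu> x * a x) + l\<^sup>2 * c\<^sup>2 / 2)"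
proof -
  have pointwise: "\<mu> x * exp (-l * a x) \<le> \<mu> x - l * (\<mu> x * a x) + \<mu> x * (l\<^sup>2 * c\<^sup>2 / 2)"
    if x: "x \<in> {1..q}" for x
  proof -
    have "(l * a x)\<^sup>2 \<le> (l * c)\<^sup>2"
      using a[OF x] \<open>0 \<le> l\<close> by (intro power_mono mult_left_mono) auto
    then have "exp (-(l * a x)) \<le> 1 - l * a x + l\<^sup>2 * c\<^sup>2 / 2"
      using exp_minus_le_quadratic[of "l * a x"] a[OF x] \<open>0 \<le> l\<close>
      by (simp add: power_mult_distrib)
    then have "\<mu> x * exp (-l * a x) \<le> \<mu> x * (1 - l * a x + l\<^sup>2 * c\<^sup>2 / 2)"
      using \<mu> x by (intro mult_left_mono) (auto simp: mixed_strategies_def)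
    then show ?thesis
      by (simp add: algebra_simps)
  qed
  have "(\<Sum>x=1..q. \<mu> x * exp (-l * a x))
      \<le> (\<Sum>x=1..q. \<mu> x - l * (\<mu> x * a x) + \<mu> x * (l\<^sup>2 * c\<^sup>2 / 2))"
    by (intro sum_mono pointwise)
  also have "\<dots> = (\<Sum>x=1..q. \<mu> x) - l * (\<Sum>x=1..q. \<mu> x * a x) + (\<Sum>x=1..q. \<mu> x) * (l\<^sup>2 * c\<^sup>2 / 2)"
    by (simp only: sum.distrib sum_subtractf sum_distrib_left[symmetric] sum_distrib_right[symmetric])
  also have "\<dots> = 1 + (-l * (\<Sum>x=1..q. \<mu> x * a x) + l\<^sup>2 * c\<^sup>2 / 2)"
    using \<mu> by (simp add: mixed_strategies_def)
  also have "\<dots> \<le> exp (-l * (\<Sum>x=1..q. \<mu> x * a x) + l\<^sup>2 * c\<^sup>2 / 2)"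
    by (rule exp_ge_add_one_self)
  finally show ?thesis .
qed

lemma iid_expect_exp_online_cost_le:
  fixes A :: "nat \<Rightarrow> nat \<Rightarrow> real" and ans :: "nat list \<Rightarrow> nat"
  assumes \<mu>: "\<mu> \<in> mixed_strategies q"
    and A: "\<And>x y. x \<in> {1..q} \<Longrightarrow> y \<in> {1..q} \<Longrightarrow> 0 \<le> A x y \<and> A x y \<le> c"
    and m: "\<And>y. y \<in> {1..q} \<Longrightarrow> m \<le> (\<Sum>x=1..q. \<mu> x * A x y)"
    and "0 \<le> l"
    and ans: "\<And>ys. set ys \<subseteq> {1..q} \<Longrightarrow> ans ys \<in> {1..q}"
  shows "iid_expect q \<mu> k (\<lambda>xs. exp (-l * (\<Sum>i<k. A (xs ! i) (ans (take i xs)))))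
    \<le> exp (-l * m + l\<^sup>2 * c\<^sup>2 / 2) ^ k"
  using ans
proof (induction k arbitrary: ans)
  case 0
  then show ?case by simp
next
  case (Suc k)
  let ?E = "exp (-l * m + l\<^sup>2 * c\<^sup>2 / 2)"
  let ?rest = "\<lambda>x xs. exp (-l * (\<Sum>i<k. A (xs ! i) (ans (x # take i xs))))"
  have y: "ans [] \<in> {1..q}"
    using Suc.prems by auto
  have first_round: "exp (-l * (\<Sum>i<Suc k. A ((x # xs) ! i) (ans (take i (x # xs)))))
      = exp (-l * A x (ans [])) * ?rest x xs" for x xs
    by (subst sum.lessThan_Suc_shift) (simp add: distrib_left exp_add[symmetric] del: sum.lessThan_Suc)
  have "iid_expect q \<mu> (Suc k) (\<lambda>xs. exp (-l * (\<Sum>i<Suc k. A (xs ! i) (ans (take i xs)))))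
      = (\<Sum>x=1..q. \<mu> x * (exp (-l * A x (ans [])) * iid_expect q \<mu> k (?rest x)))"
    using iid_expect_affine[OF \<mu>, of _ 0] by (simp only: iid_expect.simps first_round) simp
  also have "\<dots> \<le> (\<Sum>x=1..q. \<mu> x * exp (-l * A x (ans []))) * ?E ^ k"
    unfolding sum_distrib_right mult.assoc
  proof (intro sum_mono mult_left_mono)
    fix x
    assume x: "x \<in> {1..q}"
    show "iid_expect q \<mu> k (?rest x) \<le> ?E ^ k"
      using Suc.IH[of "\<lambda>ys. ans (x # ys)"] Suc.prems x by simp
    show "0 \<le> \<mu> x"
      using \<mu> x by (simp add: mixed_strategies_def)
  qed simp
  also have "\<dots> \<le> ?E * ?E ^ k"
  proof (rule mult_right_mono)
    have "(\<Sum>x=1..q. \<mu> x * exp (-l * A x (ans [])))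
        \<le> exp (-l * (\<Sum>x=1..q. \<mu> x * A x (ans [])) + l\<^sup>2 * c\<^sup>2 / 2)"
      using A y \<open>0 \<le> l\<close> by (intro hoeffding_lemma_nonneg[OF \<mu>]) auto
    also have "\<dots> \<le> ?E"
      using m[OF y] \<open>0 \<le> l\<close> by (simp add: mult_left_mono)
    finally show "(\<Sum>x=1..q. \<mu> x * exp (-l * A x (ans []))) \<le> ?E" .
  qed simp
  finally show ?case
    by simp
qed

lemma wf_alg_answer_mem: "wf_alg q D \<Longrightarrow> set xs \<subseteq> {1..q} \<Longrightarrow> answer D n xs w \<in> {1..q}"
  by (simp add: wf_alg_def)

lemma wf_alg_answer_eq:
  "(\<forall>i < reads D n xs w. w' i = w i) \<Longrightarrow> wf_alg q D \<Longrightarrow> answer D n xs w' = answer D n xs w"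
  by (simp add: wf_alg_def)

definition advice_prefixes :: "nat \<Rightarrow> (nat \<Rightarrow> bool) set" where
  "advice_prefixes B = (\<lambda>bs i. i < B \<and> bs ! i) ` {bs. length bs = B}"

lemma finite_advice_prefixes: "finite (advice_prefixes B)"
  unfolding advice_prefixes_def using finite_lists_length_eq[of "UNIV :: bool set" B] by simp

lemma card_advice_prefixes_le: "card (advice_prefixes B) \<le> 2 ^ B"
proof -
  have "card (advice_prefixes B) \<le> card {bs :: bool list. length bs = B}"
    unfolding advice_prefixes_def
    by (rule card_image_le) (use finite_lists_length_eq[of "UNIV :: bool set" B] in simp)
  then show ?thesis
    using card_lists_length_eq[of "UNIV :: bool set" B] by simp
qed

lemma alg_cost_eq_prefix_advice_cost:
  assumes wf: "wf_alg q D"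
    and bits: "bits_read D n xs \<le> B"
  shows "\<exists>w\<in>advice_prefixes B. alg_cost A D n xs = (\<Sum>i<n. A (xs ! i) (answer D n (take i xs) w))"
proof
  define w0 where "w0 = advice D n xs"
  define w where "w i = (i < B \<and> w0 i)" for i
  have "w = (\<lambda>i. i < B \<and> map w0 [0..<B] ! i)"
    unfolding w_def by (auto simp: fun_eq_iff)
  then show "w \<in> advice_prefixes B"
    unfolding advice_prefixes_def by auto
  have "answer D n (take i xs) w = answer D n (take i xs) w0" if "i < n" for i
  proof -
    have "finite ((\<lambda>i. reads D n (take i xs) w0) ` {..<n})"
      by simp
    then have "reads D n (take i xs) w0 \<le> bits_read D n xs"
      unfolding bits_read_def w0_def using that
      by (intro Max_ge) (auto simp: image_def)
    then have "\<forall>j < reads D n (take i xs) w0. w j = w0 j"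
      using bits unfolding w_def by auto
    then show ?thesis
      using wf by (rule wf_alg_answer_eq)
  qed
  then show "alg_cost A D n xs = (\<Sum>i<n. A (xs ! i) (answer D n (take i xs) w))"
    unfolding alg_cost_def w0_def by simp
qed

lemma advice_alg_cost_lower_bound:
  fixes A :: "nat \<Rightarrow> nat \<Rightarrow> real"
  assumes \<mu>: "\<mu> \<in> mixed_strategies q"
    and A: "\<And>x y. x \<in> {1..q} \<Longrightarrow> y \<in> {1..q} \<Longrightarrow> 0 \<le> A x y \<and> A x y \<le> c"
    and m: "\<And>y. y \<in> {1..q} \<Longrightarrow> m \<le> (\<Sum>x=1..q. \<mu> x * A x y)"
    and "0 \<le> l"
    and wf: "wf_alg q D"
    and bits: "\<And>xs. valid_input q n xs \<Longrightarrow> bits_read D n xs \<le> B"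
  shows "l * real n * m - real B * ln 2 - real n * (l\<^sup>2 * c\<^sup>2 / 2)
    \<le> l * iid_expect q \<mu> n (alg_cost A D n)"
proof -
  define E where "E = exp (-l * m + l\<^sup>2 * c\<^sup>2 / 2)"
  define cost where "cost w xs = (\<Sum>i<n. A (xs ! i) (answer D n (take i xs) w))" for w xs
  have "exp (-l * iid_expect q \<mu> n (alg_cost A D n))
      = exp (iid_expect q \<mu> n (\<lambda>xs. 0 + (-l) * alg_cost A D n xs))"
    by (simp only: iid_expect_affine[OF \<mu>]) simp
  also have "\<dots> \<le> iid_expect q \<mu> n (\<lambda>xs. exp (-l * alg_cost A D n xs))"
    using exp_iid_expect_le[OF \<mu>] by simp
  also have "\<dots> \<le> iid_expect q \<mu> n (\<lambda>xs. \<Sum>w\<in>advice_prefixes B. exp (-l * cost w xs))"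
  proof (rule iid_expect_mono[OF \<mu>])
    fix xs :: "nat list"
    assume "length xs = n" "set xs \<subseteq> {1..q}"
    then obtain w where "w \<in> advice_prefixes B" "alg_cost A D n xs = cost w xs"
      using alg_cost_eq_prefix_advice_cost[OF wf bits] unfolding cost_def valid_input_def by blast
    then show "exp (-l * alg_cost A D n xs) \<le> (\<Sum>w\<in>advice_prefixes B. exp (-l * cost w xs))"
      by (auto intro: member_le_sum finite_advice_prefixes)
  qed
  also have "\<dots> = (\<Sum>w\<in>advice_prefixes B. iid_expect q \<mu> n (\<lambda>xs. exp (-l * cost w xs)))"
    by (rule iid_expect_sum[OF finite_advice_prefixes])
  also have "\<dots> \<le> (\<Sum>w\<in>advice_prefixes B. E ^ n)"
    unfolding cost_def E_def
    using wf \<open>0 \<le> l\<close>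
    by (intro sum_mono iid_expect_exp_online_cost_le[OF \<mu> A m] wf_alg_answer_mem)
  also have "\<dots> \<le> 2 ^ B * E ^ n"
    using card_advice_prefixes_le[of B] by (simp add: E_def)
  also have "\<dots> = exp (real B * ln 2 + real n * (-l * m + l\<^sup>2 * c\<^sup>2 / 2))"
    by (simp add: exp_add exp_of_nat_mult E_def)
  finally show ?thesis
    by (simp add: algebra_simps)
qed

lemma max_entry_ge:
  assumes "x \<in> {1..q}" "y \<in> {1..q}"
  shows "A x y \<le> max_entry q A"
proof -
  have "{A x y | x y. x \<in> {1..q} \<and> y \<in> {1..q}} = (\<lambda>(x, y). A x y) ` ({1..q} \<times> {1..q})"
    by auto blast
  then show ?thesis
    unfolding max_entry_def using assms by (auto intro!: Max_ge)
qed

lemma game_value_approx_by_row_strategy: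
  fixes A :: "nat \<Rightarrow> nat \<Rightarrow> real"
  assumes "1 \<le> q"
    and A: "\<And>x y. x \<in> {1..q} \<Longrightarrow> y \<in> {1..q} \<Longrightarrow> 0 \<le> A x y \<and> A x y \<le> c"
    and "0 < d"
  obtains \<mu> where "\<mu> \<in> mixed_strategies q"
    and "\<And>y. y \<in> {1..q} \<Longrightarrow> game_value q A - d \<le> (\<Sum>x=1..q. \<mu> x * A x y)"
proof -
  define F where "F \<mu> \<nu> = (\<Sum>x=1..q. \<Sum>y=1..q. \<mu> x * \<nu> y * A x y)" for \<mu> \<nu> :: "nat \<Rightarrow> real"
  define g where "g \<mu> = (INF \<nu>\<in>mixed_strategies q. F \<mu> \<nu>)" for \<mu>
  define pure where "pure y z = (if z = y then 1 else 0 :: real)" for y z :: nat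
  have pure: "pure y \<in> mixed_strategies q" if "y \<in> {1..q}" for y
    using that by (simp add: mixed_strategies_def pure_def)
  have F_pure: "F \<mu> (pure y) = (\<Sum>x=1..q. \<mu> x * A x y)" if "y \<in> {1..q}" for \<mu> y
  proof -
    have "(\<Sum>z=1..q. \<mu> x * pure y z * A x z) = (\<Sum>z=1..q. if z = y then \<mu> x * A x z else 0)" for x
      by (rule sum.cong) (auto simp: pure_def)
    then show ?thesis
      using that by (simp add: F_def)
  qed
  have bdd: "bdd_below (F \<mu> ` mixed_strategies q)" if "\<mu> \<in> mixed_strategies q" for \<mu>
    using that A by (intro bdd_belowI2[of _ 0]) (auto simp: F_def mixed_strategies_def intro!: sum_nonneg)
  have g_le: "g \<mu> \<le> (\<Sum>x=1..q. \<mu> x * A x y)"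
    if "\<mu> \<in> mixed_strategies q" "y \<in> {1..q}" for \<mu> y
    using cINF_lower[OF bdd[OF that(1)] pure[OF that(2)]] F_pure[OF that(2)]
    unfolding g_def by simp
  have one: "1 \<in> {1..q}"
    using \<open>1 \<le> q\<close> by simp
  have "g \<mu> \<le> c" if \<mu>: "\<mu> \<in> mixed_strategies q" for \<mu>
  proof -
    have "g \<mu> \<le> (\<Sum>x=1..q. \<mu> x * A x 1)"
      by (rule g_le[OF \<mu> one])
    also have "\<dots> \<le> (\<Sum>x=1..q. \<mu> x * c)"
      using \<mu> A one by (intro sum_mono mult_left_mono) (auto simp: mixed_strategies_def)
    also have "\<dots> = c"
      using \<mu> by (simp add: sum_distrib_right[symmetric] mixed_strategies_def)
    finally show ?thesis .
  qed
  then have "bdd_above (g ` mixed_strategies q)"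
    by (intro bdd_aboveI2)
  moreover have "mixed_strategies q \<noteq> {}"
    using pure[OF one] by auto
  moreover have "game_value q A - d < (SUP \<mu>\<in>mixed_strategies q. g \<mu>)"
    using \<open>0 < d\<close> by (simp add: game_value_def g_def F_def)
  ultimately obtain \<mu> where \<mu>: "\<mu> \<in> mixed_strategies q" and "game_value q A - d < g \<mu>"
    using less_cSUP_iff[of "mixed_strategies q" g] by blast
  then have "game_value q A - d \<le> (\<Sum>x=1..q. \<mu> x * A x y)" if "y \<in> {1..q}" for y
    using g_le[OF \<mu> that] by linarith
  with \<mu> show ?thesis
    by (rule that)
qed

lemma alg_cost_bounds:
  assumes "wf_alg q D" "valid_input q n xs"
    and A: "\<And>x y. x \<in> {1..q} \<Longrightarrow> y \<in> {1..q} \<Longrightarrow> 0 \<le> A x y \<and> A x y \<le> c"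
  shows "0 \<le> alg_cost A D n xs" "alg_cost A D n xs \<le> real n * c"
proof -
  let ?a = "\<lambda>i. A (xs ! i) (answer D n (take i xs) (advice D n xs))"
  have a: "0 \<le> ?a i \<and> ?a i \<le> c" if "i < n" for i
  proof (rule A)
    show "xs ! i \<in> {1..q}"
      using assms(2) that unfolding valid_input_def by (metis nth_mem subsetD)
    have "set (take i xs) \<subseteq> {1..q}"
      using assms(2) unfolding valid_input_def by (meson order_trans set_take_subset)
    with assms(1) show "answer D n (take i xs) (advice D n xs) \<in> {1..q}"
      by (rule wf_alg_answer_mem)
  qed
  have "(\<Sum>i<n. ?a i) \<le> (\<Sum>i<n. c)"
    using a by (intro sum_mono) blast
  then show "alg_cost A D n xs \<le> real n * c"
    unfolding alg_cost_def by simp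
  show "0 \<le> alg_cost A D n xs"
    unfolding alg_cost_def using a by (intro sum_nonneg) blast
qed

lemma randomized_advice_alg_cost_lower_bound:
  fixes A :: "nat \<Rightarrow> nat \<Rightarrow> real" and alg :: "'w \<Rightarrow> det_adv_alg"
  assumes "prob_space M"
    and \<mu>: "\<mu> \<in> mixed_strategies q"
    and A: "\<And>x y. x \<in> {1..q} \<Longrightarrow> y \<in> {1..q} \<Longrightarrow> 0 \<le> A x y \<and> A x y \<le> c"
    and m: "\<And>y. y \<in> {1..q} \<Longrightarrow> m \<le> (\<Sum>x=1..q. \<mu> x * A x y)"
    and "0 \<le> l"
    and wf: "\<And>\<omega>. \<omega> \<in> space M \<Longrightarrow> wf_alg q (alg \<omega>)"
    and bits: "\<And>\<omega> xs. \<omega> \<in> space M \<Longrightarrow> valid_input q n xs \<Longrightarrow> bits_read (alg \<omega>) n xs \<le> B"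
    and int: "\<And>xs. valid_input q n xs \<Longrightarrow> integrable M (\<lambda>\<omega>. alg_cost A (alg \<omega>) n xs)"
  shows "l * real n * m - real B * ln 2 - real n * (l\<^sup>2 * c\<^sup>2 / 2)
    \<le> l * iid_expect q \<mu> n (\<lambda>xs. \<integral>\<omega>. alg_cost A (alg \<omega>) n xs \<partial>M)"
proof -
  interpret prob_space M
    by fact
  let ?cost = "\<lambda>\<omega>. alg_cost A (alg \<omega>) n"
  have int': "integrable M (\<lambda>\<omega>. iid_expect q \<mu> n (?cost \<omega>))"
    and swap: "(\<integral>\<omega>. iid_expect q \<mu> n (?cost \<omega>) \<partial>M) = iid_expect q \<mu> n (\<lambda>xs. \<integral>\<omega>. ?cost \<omega> xs \<partial>M)"
    using iid_expect_integral[of n q M ?cost \<mu>] int unfolding valid_input_def by auto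
  have "l * real n * m - real B * ln 2 - real n * (l\<^sup>2 * c\<^sup>2 / 2)
      \<le> (\<integral>\<omega>. l * iid_expect q \<mu> n (?cost \<omega>) \<partial>M)"
    using int' wf bits
    by (intro integral_ge_const AE_I2 advice_alg_cost_lower_bound[OF \<mu> A m \<open>0 \<le> l\<close>]) auto
  then show ?thesis
    by (simp add: swap)
qed

lemma le_of_forall_pos_le_add_mult:
  fixes x y K :: real
  assumes "\<And>d. 0 < d \<Longrightarrow> x \<le> y + K * d" and "0 \<le> K"
  shows "x \<le> y"
proof (rule field_le_epsilon)
  fix e :: real
  assume "0 < e"
  have "x \<le> y + K * (e / (K + 1))"
    using \<open>0 < e\<close> assms(2) by (intro assms(1)) simp
  also have "K * (e / (K + 1)) \<le> e"
    using assms(2) \<open>0 < e\<close> by (simp add: field_simps)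
  finally show "x \<le> y + e"
    by simp
qed
lemma bits_ge_of_exponential_tradeoff:
  fixes \<epsilon> c :: real
  assumes "0 < \<epsilon>"
    and tradeoff: "\<And>l. 0 < l \<Longrightarrow> l * real n * \<epsilon> \<le> real B * ln 2 + real n * (l\<^sup>2 * c\<^sup>2 / 2)"
  shows "\<epsilon>\<^sup>2 / (2 * ln 2 * c\<^sup>2) * real n \<le> real B"
proof (cases "c = 0")
  case False
  define l where "l = \<epsilon> / c\<^sup>2"
  define t where "t = real n * \<epsilon>\<^sup>2 / (2 * c\<^sup>2)"
  have "l * real n * \<epsilon> = 2 * t" "real n * (l\<^sup>2 * c\<^sup>2 / 2) = t"
    unfolding l_def t_def using False by (simp_all add: power2_eq_square)
  moreover have "0 < l"
    unfolding l_def using \<open>0 < \<epsilon>\<close> False by simp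
  ultimately have "t \<le> real B * ln 2"
    using tradeoff[of l] by simp
  moreover have "\<epsilon>\<^sup>2 / (2 * ln 2 * c\<^sup>2) * real n = t / ln 2"
    unfolding t_def by (simp add: ac_simps)
  ultimately show ?thesis
    by (simp add: pos_divide_le_eq)
qed simp

theorem theorem3:
  fixes q :: nat and A :: "nat \<Rightarrow> nat \<Rightarrow> real" and \<epsilon> :: real
    and M :: "'w measure" and alg :: "'w \<Rightarrow> det_adv_alg" and b :: "nat \<Rightarrow> nat"
  assumes "q \<ge> 2"
    and "\<forall>x\<in>{1..q}. \<forall>y\<in>{1..q}. A x y \<ge> 0"
    and "0 < \<epsilon>" and "\<epsilon> \<le> game_value q A"
    and "prob_space M"
    and "\<forall>\<omega>\<in>space M. wf_alg q (alg \<omega>)"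
    and "\<forall>n xs. valid_input q n xs \<longrightarrow> (\<lambda>\<omega>. alg_cost A (alg \<omega>) n xs) \<in> borel_measurable M"
    and "\<forall>n xs. valid_input q n xs \<longrightarrow>
           (\<integral>\<omega>. alg_cost A (alg \<omega>) n xs \<partial>M) \<le> (game_value q A - \<epsilon>) * real n"
    and "\<forall>n xs. \<forall>\<omega>\<in>space M. valid_input q n xs \<longrightarrow> bits_read (alg \<omega>) n xs \<le> b n"
  shows "\<forall>n. real (b n) \<ge> \<epsilon>\<^sup>2 / (2 * ln 2 * (max_entry q A)\<^sup>2) * real n"
proof
  fix n
  interpret prob_space M
    by fact
  let ?c = "max_entry q A" and ?V = "game_value q A"
  have A: "0 \<le> A x y \<and> A x y \<le> ?c" if "x \<in> {1..q}" "y \<in> {1..q}" for x y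
    using assms(2) that max_entry_ge by blast
  have integrable: "integrable M (\<lambda>\<omega>. alg_cost A (alg \<omega>) n xs)" if "valid_input q n xs" for xs
    using assms(6,7) alg_cost_bounds[OF _ that A] that
    by (intro integrable_const_bound[where B = "real n * ?c"] AE_I2) auto
  have slack: "l * real n * \<epsilon> \<le> real (b n) * ln 2 + real n * (l\<^sup>2 * ?c\<^sup>2 / 2) + (l * real n) * d"
    if "0 < l" "0 < d" for l d
  proof -
    obtain \<mu> where \<mu>: "\<mu> \<in> mixed_strategies q"
      and m: "\<And>y. y \<in> {1..q} \<Longrightarrow> ?V - d \<le> (\<Sum>x=1..q. \<mu> x * A x y)"
      using game_value_approx_by_row_strategy[of q A ?c d] assms(1) A \<open>0 < d\<close> by auto
    have "l * real n * (?V - d) - real (b n) * ln 2 - real n * (l\<^sup>2 * ?c\<^sup>2 / 2)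
        \<le> l * iid_expect q \<mu> n (\<lambda>xs. \<integral>\<omega>. alg_cost A (alg \<omega>) n xs \<partial>M)"
      using assms(5,6,9) \<open>0 < l\<close> integrable
      by (intro randomized_advice_alg_cost_lower_bound[OF _ \<mu> A m]) auto
    also have "\<dots> \<le> l * ((?V - \<epsilon>) * real n)"
    proof (rule mult_left_mono)
      have "iid_expect q \<mu> n (\<lambda>xs. \<integral>\<omega>. alg_cost A (alg \<omega>) n xs \<partial>M)
          \<le> iid_expect q \<mu> n (\<lambda>_. (?V - \<epsilon>) * real n)"
        by (rule iid_expect_mono[OF \<mu>]) (use assms(8) in \<open>auto simp: valid_input_def\<close>)
      then show "iid_expect q \<mu> n (\<lambda>xs. \<integral>\<omega>. alg_cost A (alg \<omega>) n xs \<partial>M) \<le> (?V - \<epsilon>) * real n"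
        by (simp only: iid_expect_const[OF \<mu>])
    qed (use \<open>0 < l\<close> in simp)
    finally show ?thesis
      by (simp add: algebra_simps)
  qed
  have "l * real n * \<epsilon> \<le> real (b n) * ln 2 + real n * (l\<^sup>2 * ?c\<^sup>2 / 2)" if "0 < l" for l
  proof (rule le_of_forall_pos_le_add_mult)
    show "0 \<le> l * real n"
      using that by simp
  qed (rule slack[OF that])
  then show "\<epsilon>\<^sup>2 / (2 * ln 2 * ?c\<^sup>2) * real n \<le> real (b n)"
    by (rule bits_ge_of_exponential_tradeoff[OF assms(3)])
qed

end
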